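(* There exist two disjoint thin sets $T_0,T_1\subseteq\mathbb{Z}_2^\omega$, neither of which is Borel, such that $T_0\cup T_1=\mathbb{Z}_2^\omega$.
   Context: $\mathbb{Z}_2^\omega$ is the Cantor cube of infinite binary sequences indexed by $\omega=\{0,1,2,\dots\}$, with the product topology. A set $T\subseteq\mathbb{Z}_2^\omega$ is thin if for every $n\in\omega$ the map $x\mapsto x|_{\omega\setminus\{n\}}$ is injective on $T$ (equivalently, no two distinct elements of $T$ differ in exactly one coordinate). *)

theory Defs
  imports "HOL-Analysis.Analysis"
begin

definition cantor_top :: "(nat \<Rightarrow> bool) topology" where
  "cantor_top = product_topology (\<lambda>_. discrete_topology (UNIV :: bool set)) (UNIV :: nat set)"

definition cantor_borel :: "(nat \<Rightarrow> bool) set set" where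
  "cantor_borel = sigma_sets (UNIV :: (nat \<Rightarrow> bool) set) {U. openin cantor_top U}"

definition thin :: "(nat \<Rightarrow> bool) set \<Rightarrow> bool" where
  "thin T \<longleftrightarrow> (\<forall>n. inj_on (\<lambda>x. restrict x (UNIV - {n})) T)"

end

theory Submission
  imports Defs
begin

text \<open>Call two points almost equal if they differ in finitely many coordinates, pick a
  representative in every almost-equality class, and let T be the set of points at even Hamming
  distance from their representative. Changing one coordinate keeps the representative and changes
  that distance by one, so it moves the point between T and its complement; hence both sets are
  thin. Neither has the Baire property: such a set is meager or comeager on some basic cylinder,
  and flipping a coordinate not fixed by the cylinder preserves the cylinder while exchanging T
  with its complement, so both would be meager there, contradicting the Baire category theorem.
  Borel sets have the Baire property, so neither set is Borel.\<close>

definition cylinder :: "(nat \<Rightarrow> bool) \<Rightarrow> nat \<Rightarrow> (nat \<Rightarrow> bool) set" where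
  "cylinder s n = {y. \<forall>i<n. y i = s i}"

lemma cylinder_antimono: "m \<le> n \<Longrightarrow> cylinder s n \<subseteq> cylinder s m"
  by (auto simp: cylinder_def)

lemma mem_cylinder_self [simp]: "s \<in> cylinder s n"
  by (simp add: cylinder_def)

lemma cylinder_eq_if_mem: "y \<in> cylinder s n \<Longrightarrow> cylinder y n = cylinder s n"
  by (auto simp: cylinder_def)

definition flip_at :: "nat \<Rightarrow> (nat \<Rightarrow> bool) \<Rightarrow> nat \<Rightarrow> bool" where
  "flip_at k x = x(k := \<not> x k)"

lemma flip_at_flip_at [simp]: "flip_at k (flip_at k x) = x"
  by (simp add: flip_at_def)

lemma vimage_flip_at_cylinder: "flip_at k -` cylinder s n = cylinder (flip_at k s) n"
  by (auto simp: cylinder_def flip_at_def)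

lemma vimage_flip_at_cylinder_beyond: "n \<le> k \<Longrightarrow> flip_at k -` cylinder s n = cylinder s n"
  by (auto simp: cylinder_def flip_at_def)

text \<open>Nowhere density, meagerness and openness are phrased with the base of cylinders;
  \<open>openin_cantor_top_imp_cylinder_open\<close> is the only link to \<open>cantor_top\<close>.\<close>

definition nowhere_dense :: "(nat \<Rightarrow> bool) set \<Rightarrow> bool" where
  "nowhere_dense N \<longleftrightarrow> (\<forall>s k. \<exists>t m. cylinder t m \<subseteq> cylinder s k \<and> cylinder t m \<inter> N = {})"

definition meager :: "(nat \<Rightarrow> bool) set \<Rightarrow> bool" where
  "meager M \<longleftrightarrow> (\<exists>F :: nat \<Rightarrow> (nat \<Rightarrow> bool) set. (\<forall>n. nowhere_dense (F n)) \<and> M \<subseteq> (\<Union>n. F n))"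

lemma nowhere_dense_imp_meager: "nowhere_dense N \<Longrightarrow> meager N"
  unfolding meager_def by (intro exI[of _ "\<lambda>_. N"]) auto

lemma meager_empty: "meager {}"
  by (rule nowhere_dense_imp_meager) (auto simp: nowhere_dense_def)

lemma meager_subset: "meager M \<Longrightarrow> N \<subseteq> M \<Longrightarrow> meager N"
  unfolding meager_def by blast

lemma meager_UN:
  assumes "\<And>i :: nat. meager (M i)"
  shows "meager (\<Union>i. M i)"
proof -
  have "\<forall>i. \<exists>F. (\<forall>n :: nat. nowhere_dense (F n)) \<and> M i \<subseteq> (\<Union>n. F n)"
    using assms unfolding meager_def by blast
  then obtain F :: "nat \<Rightarrow> nat \<Rightarrow> (nat \<Rightarrow> bool) set"
    where F: "\<forall>i. (\<forall>n. nowhere_dense (F i n)) \<and> M i \<subseteq> (\<Union>n. F i n)"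
    by (rule choice[THEN exE])
  define G where "G k = F (fst (prod_decode k)) (snd (prod_decode k))" for k
  have "(\<Union>i. M i) \<subseteq> (\<Union>k. G k)"
  proof
    fix x assume "x \<in> (\<Union>i. M i)"
    then obtain i n where "x \<in> F i n" using F by blast
    then have "x \<in> G (prod_encode (i, n))" by (simp add: G_def)
    then show "x \<in> (\<Union>k. G k)" by blast
  qed
  moreover have "\<forall>k. nowhere_dense (G k)"
    using F by (simp add: G_def)
  ultimately show ?thesis
    unfolding meager_def by blast
qed

lemma meager_Un: "meager A \<Longrightarrow> meager B \<Longrightarrow> meager (A \<union> B)"
proof -
  assume "meager A" "meager B"
  then have "meager (\<Union>i :: nat. if i = 0 then A else B)"
    by (intro meager_UN) simp
  moreover have "(\<Union>i :: nat. if i = 0 then A else B) = A \<union> B"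
    by (auto split: if_splits)
  ultimately show ?thesis by simp
qed

lemma nowhere_dense_vimage_flip_at:
  assumes "nowhere_dense N"
  shows "nowhere_dense (flip_at j -` N)"
  unfolding nowhere_dense_def
proof (intro allI)
  fix s k
  obtain t m where tm: "cylinder t m \<subseteq> cylinder (flip_at j s) k" "cylinder t m \<inter> N = {}"
    using assms unfolding nowhere_dense_def by blast
  have "cylinder (flip_at j t) m \<subseteq> cylinder s k"
    using vimage_mono[OF tm(1), of "flip_at j"] by (simp add: vimage_flip_at_cylinder)
  moreover have "cylinder (flip_at j t) m \<inter> flip_at j -` N = {}"
    using arg_cong[OF tm(2), of "vimage (flip_at j)"] by (simp add: vimage_flip_at_cylinder)
  ultimately show "\<exists>t m. cylinder t m \<subseteq> cylinder s k \<and> cylinder t m \<inter> flip_at j -` N = {}"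
    by blast
qed

lemma meager_vimage_flip_at:
  assumes "meager M"
  shows "meager (flip_at j -` M)"
proof -
  obtain F :: "nat \<Rightarrow> (nat \<Rightarrow> bool) set"
    where F: "\<forall>n. nowhere_dense (F n)" "M \<subseteq> (\<Union>n. F n)"
    using assms unfolding meager_def by blast
  have "\<forall>n. nowhere_dense (flip_at j -` F n)"
    using F(1) by (simp add: nowhere_dense_vimage_flip_at)
  moreover have "flip_at j -` M \<subseteq> (\<Union>n. flip_at j -` F n)"
    using F(2) by blast
  ultimately show ?thesis
    unfolding meager_def by (intro exI[of _ "\<lambda>n. flip_at j -` F n"] conjI)
qed

lemma nested_cylinders_have_common_point:
  assumes nested: "\<And>n. cylinder (s (Suc n)) (l (Suc n)) \<subseteq> cylinder (s n) (l n)"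
    and long: "strict_mono l"
  shows "\<exists>z. \<forall>n. z \<in> cylinder (s n) (l n)"
proof -
  have nest: "s j \<in> cylinder (s n) (l n)" if "n \<le> j" for n j
    using lift_Suc_antimono_le[of "\<lambda>n. cylinder (s n) (l n)", OF nested that] by auto
  have "(\<lambda>i. s (Suc i) i) \<in> cylinder (s n) (l n)" for n
    unfolding cylinder_def
  proof (intro CollectI allI impI)
    fix i assume i: "i < l n"
    show "s (Suc i) i = s n i"
    proof (cases "n \<le> Suc i")
      case True
      then show ?thesis using nest i by (auto simp: cylinder_def)
    next
      case False
      have "i < l (Suc i)" using seq_suble[OF long, of "Suc i"] by simp
      then show ?thesis using nest[of "Suc i" n] False by (auto simp: cylinder_def)
    qed
  qed
  then show ?thesis by blast
qed

lemma nowhere_dense_imp_long_disjoint_subcylinder: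
  assumes "nowhere_dense N"
  shows "\<exists>t m. k < m \<and> cylinder t m \<subseteq> cylinder s k \<and> cylinder t m \<inter> N = {}"
proof -
  obtain t m where "cylinder t m \<subseteq> cylinder s k" "cylinder t m \<inter> N = {}"
    using assms unfolding nowhere_dense_def by blast
  moreover have "cylinder t (max m (Suc k)) \<subseteq> cylinder t m"
    by (rule cylinder_antimono) simp
  ultimately show ?thesis
    by (intro exI[of _ t] exI[of _ "max m (Suc k)"]) auto
qed

theorem cylinder_not_meager: "\<not> meager (cylinder s k)"
proof
  assume "meager (cylinder s k)"
  then obtain F :: "nat \<Rightarrow> (nat \<Rightarrow> bool) set"
    where F: "\<And>n. nowhere_dense (F n)" "cylinder s k \<subseteq> (\<Union>n. F n)"
    unfolding meager_def by blast
  have "\<forall>n s k. \<exists>t m. k < m \<and> cylinder t m \<subseteq> cylinder s k \<and> cylinder t m \<inter> F n = {}"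
    using F(1) nowhere_dense_imp_long_disjoint_subcylinder by blast
  then obtain t m where shrink: "\<And>n s k. k < m n s k \<and> cylinder (t n s k) (m n s k) \<subseteq> cylinder s k
      \<and> cylinder (t n s k) (m n s k) \<inter> F n = {}"
    by metis
  define P where "P = rec_nat (s, k) (\<lambda>n (s', k'). (t n s' k', m n s' k'))"
  have P_0: "P 0 = (s, k)"
    and P_Suc: "P (Suc n) = (t n (fst (P n)) (snd (P n)), m n (fst (P n)) (snd (P n)))" for n
    by (simp_all add: P_def split_beta)
  let ?C = "\<lambda>n. cylinder (fst (P n)) (snd (P n))"
  have step: "?C (Suc n) \<subseteq> ?C n" "?C (Suc n) \<inter> F n = {}" "snd (P n) < snd (P (Suc n))" for n
    using shrink[where n = n and s = "fst (P n)" and k = "snd (P n)"] by (simp_all add: P_Suc)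
  obtain z where z: "\<And>n. z \<in> ?C n"
    using nested_cylinders_have_common_point[of "\<lambda>n. fst (P n)" "\<lambda>n. snd (P n)"] step
    by (auto simp: strict_mono_Suc_iff)
  obtain n where "z \<in> F n"
    using z[of 0] F(2) by (auto simp: P_0)
  then show False
    using z[of "Suc n"] step(2)[of n] by blast
qed

definition cylinder_open :: "(nat \<Rightarrow> bool) set \<Rightarrow> bool" where
  "cylinder_open U \<longleftrightarrow> (\<forall>x\<in>U. \<exists>n. cylinder x n \<subseteq> U)"

definition baire_property :: "(nat \<Rightarrow> bool) set \<Rightarrow> bool" where
  "baire_property A \<longleftrightarrow> (\<exists>U. cylinder_open U \<and> meager (sym_diff A U))"

lemma openin_cantor_top_imp_cylinder_open:
  assumes "openin cantor_top U"
  shows "cylinder_open U"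
  unfolding cylinder_open_def
proof
  fix x assume "x \<in> U"
  then obtain V where V: "finite {i \<in> UNIV. V i \<noteq> topspace (discrete_topology (UNIV :: bool set))}"
      "x \<in> Pi\<^sub>E UNIV V" "Pi\<^sub>E UNIV V \<subseteq> U"
    using assms unfolding cantor_top_def openin_product_topology_alt by blast
  have "finite {i. V i \<noteq> UNIV}"
    using V(1) by simp
  then obtain n where n: "\<And>i. V i \<noteq> UNIV \<Longrightarrow> i < n"
    using finite_nat_bounded[of "{i. V i \<noteq> UNIV}"] by (auto simp: lessThan_def)
  have "cylinder x n \<subseteq> Pi\<^sub>E UNIV V"
  proof
    fix y assume y: "y \<in> cylinder x n"
    have "y i \<in> V i" for i
    proof (cases "i < n")
      case True
      then show ?thesis using y V(2) by (auto simp: cylinder_def PiE_def)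
    next
      case False
      then show ?thesis using n[of i] by auto
    qed
    then show "y \<in> Pi\<^sub>E UNIV V" by (simp add: PiE_def)
  qed
  then show "\<exists>n. cylinder x n \<subseteq> U"
    using V(3) by blast
qed

lemma cylinder_open_imp_baire_property: "cylinder_open U \<Longrightarrow> baire_property U"
  unfolding baire_property_def using meager_empty by auto

definition cylinder_exterior :: "(nat \<Rightarrow> bool) set \<Rightarrow> (nat \<Rightarrow> bool) set" where
  "cylinder_exterior U = {x. \<exists>n. cylinder x n \<inter> U = {}}"

lemma cylinder_open_cylinder_exterior: "cylinder_open (cylinder_exterior U)"
  unfolding cylinder_open_def
proof
  fix x assume "x \<in> cylinder_exterior U"
  then obtain n where "cylinder x n \<inter> U = {}"
    unfolding cylinder_exterior_def by blast
  then have "cylinder x n \<subseteq> cylinder_exterior U"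
    using cylinder_eq_if_mem unfolding cylinder_exterior_def by blast
  then show "\<exists>n. cylinder x n \<subseteq> cylinder_exterior U" by blast
qed

lemma nowhere_dense_boundary:
  assumes "cylinder_open U"
  shows "nowhere_dense (- U - cylinder_exterior U)"
  unfolding nowhere_dense_def
proof (intro allI)
  fix s k
  show "\<exists>t m. cylinder t m \<subseteq> cylinder s k \<and> cylinder t m \<inter> (- U - cylinder_exterior U) = {}"
  proof (cases "cylinder s k \<inter> U = {}")
    case True
    then have "cylinder s k \<subseteq> cylinder_exterior U"
      using cylinder_eq_if_mem unfolding cylinder_exterior_def by blast
    then show ?thesis
      by (intro exI[of _ s] exI[of _ k]) blast
  next
    case False
    then obtain y where y: "y \<in> cylinder s k" "y \<in> U" by blast
    then obtain m where "cylinder y m \<subseteq> U"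
      using assms unfolding cylinder_open_def by blast
    then have "cylinder y (max m k) \<subseteq> U"
      using cylinder_antimono[of m "max m k" y] by auto
    moreover have "cylinder y (max m k) \<subseteq> cylinder s k"
      using cylinder_antimono[of k "max m k" y] cylinder_eq_if_mem[OF y(1)] by auto
    ultimately show ?thesis
      by (intro exI[of _ y] exI[of _ "max m k"]) blast
  qed
qed

lemma baire_property_Compl:
  assumes "baire_property A"
  shows "baire_property (- A)"
proof -
  obtain U where U: "cylinder_open U" "meager (sym_diff A U)"
    using assms unfolding baire_property_def by blast
  have "meager (- U - cylinder_exterior U)"
    using nowhere_dense_boundary[OF U(1)] by (rule nowhere_dense_imp_meager)
  with U(2) have "meager (sym_diff A U \<union> (- U - cylinder_exterior U))"
    by (rule meager_Un)
  moreover have "sym_diff (- A) (cylinder_exterior U) \<subseteq> sym_diff A U \<union> (- U - cylinder_exterior U)"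
    unfolding cylinder_exterior_def using mem_cylinder_self by blast
  ultimately show ?thesis
    unfolding baire_property_def using cylinder_open_cylinder_exterior meager_subset by blast
qed

lemma baire_property_UN:
  assumes "\<And>i :: nat. baire_property (A i)"
  shows "baire_property (\<Union>i. A i)"
proof -
  have "\<forall>i. \<exists>U. cylinder_open U \<and> meager (sym_diff (A i) U)"
    using assms unfolding baire_property_def by blast
  then obtain U where U: "\<forall>i. cylinder_open (U i) \<and> meager (sym_diff (A i) (U i))"
    by (rule choice[THEN exE])
  have "meager (\<Union>i. sym_diff (A i) (U i))"
    by (rule meager_UN) (use U in blast)
  then have "meager (sym_diff (\<Union>i. A i) (\<Union>i. U i))"
    by (rule meager_subset) blast
  moreover have "cylinder_open (\<Union>i. U i)"
    unfolding cylinder_open_def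
  proof
    fix x assume "x \<in> (\<Union>i. U i)"
    then obtain i where "x \<in> U i" by blast
    then obtain n where "cylinder x n \<subseteq> U i"
      using U unfolding cylinder_open_def by blast
    then show "\<exists>n. cylinder x n \<subseteq> (\<Union>i. U i)" by blast
  qed
  ultimately show ?thesis
    unfolding baire_property_def by blast
qed

lemma cantor_borel_imp_baire_property:
  assumes "A \<in> cantor_borel"
  shows "baire_property A"
  using assms unfolding cantor_borel_def
proof (induction rule: sigma_sets.induct)
  case (Basic a)
  then show ?case
    by (simp add: openin_cantor_top_imp_cylinder_open cylinder_open_imp_baire_property)
next
  case Empty
  then show ?case
    by (simp add: cylinder_open_def cylinder_open_imp_baire_property)
next
  case (Compl a)
  then show ?case
    using baire_property_Compl by (simp add: Compl_eq_Diff_UNIV)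
next
  case (Union a)
  then show ?case
    by (blast intro: baire_property_UN)
qed

definition flips_to_complement :: "(nat \<Rightarrow> bool) set \<Rightarrow> bool" where
  "flips_to_complement A \<longleftrightarrow> (\<forall>k x. flip_at k x \<in> A \<longleftrightarrow> x \<notin> A)"

lemma flips_to_complement_Compl: "flips_to_complement A \<Longrightarrow> flips_to_complement (- A)"
  by (simp add: flips_to_complement_def)

lemma vimage_flip_at_eq_Compl: "flips_to_complement A \<Longrightarrow> flip_at k -` A = - A"
  by (auto simp: flips_to_complement_def)

lemma thin_if_flips_to_complement:
  assumes "flips_to_complement A"
  shows "thin A"
  unfolding thin_def
proof (intro allI inj_onI)
  fix n x y
  assume "x \<in> A" "y \<in> A" and eq: "restrict x (UNIV - {n}) = restrict y (UNIV - {n})"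
  have agree: "x i = y i" if "i \<noteq> n" for i
    using fun_cong[OF eq, of i] that by simp
  show "x = y"
  proof (cases "x n = y n")
    case True
    then show ?thesis
      using agree by (intro ext) metis
  next
    case False
    then have "y = flip_at n x"
      using agree by (intro ext) (auto simp: flip_at_def)
    then show ?thesis
      using \<open>x \<in> A\<close> \<open>y \<in> A\<close> assms by (simp add: flips_to_complement_def)
  qed
qed

lemma cylinder_Int_not_meager_if_flips_to_complement:
  assumes "flips_to_complement A"
  shows "\<not> meager (cylinder s n \<inter> A)"
proof
  assume meager_A: "meager (cylinder s n \<inter> A)"
  have "flip_at n -` (cylinder s n \<inter> A) = cylinder s n \<inter> - A"
    using assms by (simp add: vimage_flip_at_cylinder_beyond vimage_flip_at_eq_Compl)
  then have "meager (cylinder s n \<inter> - A)"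
    using meager_vimage_flip_at[OF meager_A, of n] by simp
  with meager_A have "meager ((cylinder s n \<inter> A) \<union> (cylinder s n \<inter> - A))"
    by (rule meager_Un)
  moreover have "(cylinder s n \<inter> A) \<union> (cylinder s n \<inter> - A) = cylinder s n"
    by blast
  ultimately show False
    using cylinder_not_meager by metis
qed

lemma not_baire_property_if_flips_to_complement:
  assumes "flips_to_complement A"
  shows "\<not> baire_property A"
proof
  assume "baire_property A"
  then obtain U where U: "cylinder_open U" "meager (sym_diff A U)"
    unfolding baire_property_def by blast
  show False
  proof (cases "U = {}")
    case True
    then have "cylinder x 0 \<inter> A \<subseteq> sym_diff A U" for x
      by blast
    then show False
      using U(2) meager_subset cylinder_Int_not_meager_if_flips_to_complement[OF assms] by blast
  next
    case False
    then obtain x n where "cylinder x n \<subseteq> U"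
      using U(1) unfolding cylinder_open_def by blast
    then have "cylinder x n \<inter> - A \<subseteq> sym_diff A U"
      by blast
    then show False
      using U(2) meager_subset
        cylinder_Int_not_meager_if_flips_to_complement[OF flips_to_complement_Compl[OF assms]]
      by blast
  qed
qed

definition almost_equal :: "(nat \<Rightarrow> bool) \<Rightarrow> (nat \<Rightarrow> bool) \<Rightarrow> bool" where
  "almost_equal x y \<longleftrightarrow> finite {i. x i \<noteq> y i}"

lemma almost_equal_sym: "almost_equal x y \<Longrightarrow> almost_equal y x"
  by (simp add: almost_equal_def eq_commute)

lemma almost_equal_trans: "almost_equal x y \<Longrightarrow> almost_equal y z \<Longrightarrow> almost_equal x z"
proof -
  assume "almost_equal x y" "almost_equal y z"
  moreover have "{i. x i \<noteq> z i} \<subseteq> {i. x i \<noteq> y i} \<union> {i. y i \<noteq> z i}"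
    by auto
  ultimately show ?thesis
    unfolding almost_equal_def by (meson finite_Un finite_subset)
qed

lemma almost_equal_flip_at: "almost_equal (flip_at k x) x"
proof -
  have "{i. flip_at k x i \<noteq> x i} = {k}"
    by (auto simp: flip_at_def)
  then show ?thesis
    unfolding almost_equal_def by simp
qed

definition E0_representative :: "(nat \<Rightarrow> bool) \<Rightarrow> nat \<Rightarrow> bool" where
  "E0_representative x = (SOME y. almost_equal y x)"

lemma almost_equal_E0_representative: "almost_equal (E0_representative x) x"
  unfolding E0_representative_def by (rule someI[of _ x]) (simp add: almost_equal_def)

lemma E0_representative_eq:
  assumes "almost_equal x x'"
  shows "E0_representative x = E0_representative x'"
proof -
  have "almost_equal y x \<longleftrightarrow> almost_equal y x'" for y
    using assms almost_equal_sym almost_equal_trans by blast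
  then show ?thesis
    unfolding E0_representative_def by simp
qed

definition E0_parity_set :: "(nat \<Rightarrow> bool) set" where
  "E0_parity_set = {x. even (card {i. x i \<noteq> E0_representative x i})}"

lemma flips_to_complement_E0_parity_set: "flips_to_complement E0_parity_set"
  unfolding flips_to_complement_def
proof (intro allI)
  fix k x
  define D where "D = {i. x i \<noteq> E0_representative x i}"
  have "finite D"
    using almost_equal_sym[OF almost_equal_E0_representative[of x]]
    unfolding D_def almost_equal_def .
  have "E0_representative (flip_at k x) = E0_representative x"
    by (rule E0_representative_eq) (rule almost_equal_flip_at)
  then have "{i. flip_at k x i \<noteq> E0_representative (flip_at k x) i}
      = (if k \<in> D then D - {k} else insert k D)"
    unfolding D_def by (auto simp: flip_at_def)
  then have "flip_at k x \<in> E0_parity_set \<longleftrightarrow> even (card (if k \<in> D then D - {k} else insert k D))"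
    unfolding E0_parity_set_def by simp
  moreover have "x \<in> E0_parity_set \<longleftrightarrow> even (card D)"
    unfolding E0_parity_set_def D_def by simp
  moreover have "card D > 0" if "k \<in> D"
    using \<open>finite D\<close> that card_gt_0_iff by blast
  ultimately show "flip_at k x \<in> E0_parity_set \<longleftrightarrow> x \<notin> E0_parity_set"
    using \<open>finite D\<close> by (cases "k \<in> D") (auto simp: card_Diff_singleton)
qed

theorem corollary14:
  shows "\<exists>T0 T1 :: (nat \<Rightarrow> bool) set.
           thin T0 \<and> thin T1 \<and> T0 \<inter> T1 = {} \<and> T0 \<union> T1 = UNIV \<and>
           T0 \<notin> cantor_borel \<and> T1 \<notin> cantor_borel"
proof -
  let ?T = E0_parity_set
  have flips: "flips_to_complement ?T" "flips_to_complement (- ?T)"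
    using flips_to_complement_E0_parity_set flips_to_complement_Compl by blast+
  then have "thin ?T" "thin (- ?T)"
    by (simp_all add: thin_if_flips_to_complement)
  moreover have "?T \<notin> cantor_borel" "- ?T \<notin> cantor_borel"
    using flips not_baire_property_if_flips_to_complement cantor_borel_imp_baire_property
    by blast+
  ultimately show ?thesis
    by (intro exI[of _ ?T] exI[of _ "- ?T"]) auto
qed

end
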